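(* Let $m\geq 2$ and let $\lambda:\mathbb{R}^{2m}\to\mathbb{R}$ be a function satisfying $\lambda(\alpha\zeta)=\alpha\lambda(\zeta)$ for all $\alpha\in\mathbb{R}$, $\zeta\in\mathbb{R}^{2m}$, and $\lambda(\zeta_1+\zeta_2)=\lambda(\zeta_1)+\lambda(\zeta_2)$ for all $\zeta_1,\zeta_2\in\mathbb{R}^{2m}$ with $[\zeta_1,\zeta_2]=0$. Then $\lambda$ is a linear functional.
   Context: For $u,v\in\mathbb{R}^{2m}$, $[u,v]:=u^T\omega v$ where $\omega=\begin{pmatrix}0&-\mathbb{1}_m\\ \mathbb{1}_m&0\end{pmatrix}$ is the standard symplectic form. *)

theory Defs
  imports "HOL-Analysis.Analysis"
begin

text \<open>R^{2m} is modelled as real ^ ('m + 'm): the indices Inl i (i in 'm) are the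
first m coordinates, Inr i the last m coordinates; m = CARD('m).\<close>

definition symp_omega :: "real ^ ('m::finite + 'm) ^ ('m + 'm)" where
  "symp_omega = (\<chi> i j. (case (i, j) of
       (Inl a, Inr b) \<Rightarrow> (if a = b then -1 else 0)
     | (Inr a, Inl b) \<Rightarrow> (if a = b then 1 else 0)
     | _ \<Rightarrow> 0))"

definition symp_form :: "real ^ ('m::finite + 'm) \<Rightarrow> real ^ ('m + 'm) \<Rightarrow> real" where
  "symp_form u v = u \<bullet> (symp_omega *v v)"

end

theory Submission
  imports Defs
begin

text \<open>
  Being additive on symplectically orthogonal pairs, \<open>\<lambda>\<close> is additive on pairwise
  orthogonal families. Hence it agrees with \<open>z \<mapsto> z \<bullet> c\<close>, where \<open>c\<^sub>k = \<lambda>(e\<^sub>k)\<close>, on the two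
  coordinate Lagrangians (vectors with only \<open>q\<close>- or only \<open>p\<close>-coordinates), and it splits
  over the \<open>m\<close> canonical symplectic planes. For \<open>z = x e\<^sub>i + y f\<^sub>i\<close> in one plane pick
  \<open>j \<noteq> i\<close> (this is where \<open>m \<ge> 2\<close> enters) and \<open>z' = x e\<^sub>j - y f\<^sub>j\<close>. For \<open>t = \<plusminus>1\<close> the vectors
  \<open>z\<close> and \<open>t z'\<close> are orthogonal, and \<open>z + t z' = x (e\<^sub>i + t e\<^sub>j) + y (f\<^sub>i - t f\<^sub>j)\<close> is the sum of
  two orthogonal vectors from the two Lagrangians. So \<open>\<lambda> z \<plusminus> \<lambda> z' = (z \<plusminus> z') \<bullet> c\<close>,
  and adding both cases gives \<open>\<lambda> z = z \<bullet> c\<close>.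
\<close>

lemma sum_UNIV_Plus:
  "sum (g :: 'a::finite + 'b::finite \<Rightarrow> 'c::comm_monoid_add) UNIV
     = (\<Sum>a\<in>UNIV. g (Inl a)) + (\<Sum>b\<in>UNIV. g (Inr b))"
  using sum.Plus[of "UNIV::'a set" "UNIV::'b set" g] by (simp add: comp_def)

lemma symp_form_as_sum:
  "symp_form u v = (\<Sum>a\<in>UNIV. u$Inr a * v$Inl a - u$Inl a * v$Inr a)"
proof -
  have "(symp_omega *v v) $ k = (case k of Inl a \<Rightarrow> - v$Inr a | Inr a \<Rightarrow> v$Inl a)" for k
    by (cases k) (simp_all add: matrix_vector_mult_def symp_omega_def sum_UNIV_Plus
        if_distrib[where f = "\<lambda>c. c * _"] cong del: if_weak_cong)
  then show ?thesis
    by (simp add: symp_form_def inner_vec_def sum_UNIV_Plus sum_subtractf sum_negf)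
qed

lemma bilinear_symp_form: "bilinear symp_form"
  unfolding bilinear_def symp_form_as_sum
  by (auto intro!: linearI simp: sum.distrib[symmetric] sum_distrib_left algebra_simps)

lemma linear_symp_form_right: "linear (symp_form u)"
  using bilinear_symp_form unfolding bilinear_def by blast

lemma symp_form_axis_Inl: "symp_form (axis (Inl a) 1) (axis (Inl b) 1) = 0"
  by (simp add: symp_form_as_sum axis_def)

lemma symp_form_axis_Inr: "symp_form (axis (Inr a) 1) (axis (Inr b) 1) = 0"
  by (simp add: symp_form_as_sum axis_def)

definition symp_plane_proj :: "'m \<Rightarrow> real ^ ('m::finite + 'm) \<Rightarrow> real ^ ('m + 'm)" where
  "symp_plane_proj i z = z $ Inl i *\<^sub>R axis (Inl i) 1 + z $ Inr i *\<^sub>R axis (Inr i) 1"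

lemma sum_symp_plane_proj: "(\<Sum>i\<in>UNIV. symp_plane_proj i z) = z"
  unfolding vec_eq_iff
proof
  show "(\<Sum>i\<in>UNIV. symp_plane_proj i z) $ k = z $ k" for k
    by (cases k) (simp_all add: symp_plane_proj_def axis_def sum.distrib if_distrib cong del: if_weak_cong)
qed

lemma symp_form_symp_plane_proj:
  "i \<noteq> j \<Longrightarrow> symp_form (symp_plane_proj i z) (symp_plane_proj j w) = 0"
  unfolding symp_form_as_sum symp_plane_proj_def by (intro sum.neutral) (auto simp: axis_def)

locale symplectically_additive =
  fixes lam :: "real ^ ('m::finite + 'm) \<Rightarrow> real"
  assumes lam_scaleR: "\<And>a z. lam (a *\<^sub>R z) = a * lam z"
    and lam_add: "\<And>z1 z2. symp_form z1 z2 = 0 \<Longrightarrow> lam (z1 + z2) = lam z1 + lam z2"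
begin

definition coeffs :: "real ^ ('m + 'm)" where
  "coeffs = (\<chi> k. lam (axis k 1))"

lemma lam_zero: "lam 0 = 0"
  using lam_scaleR[of 0 0] by simp

lemma lam_sum_pairwise_orthogonal:
  assumes "finite S" and "\<And>i j. i \<in> S \<Longrightarrow> j \<in> S \<Longrightarrow> i \<noteq> j \<Longrightarrow> symp_form (v i) (v j) = 0"
  shows "lam (\<Sum>i\<in>S. v i) = (\<Sum>i\<in>S. lam (v i))"
  using assms
proof (induction S rule: finite_induct)
  case empty
  then show ?case by (simp add: lam_zero)
next
  case (insert i S)
  have "symp_form (v i) (\<Sum>j\<in>S. v j) = (\<Sum>j\<in>S. symp_form (v i) (v j))"
    by (rule linear_sum) (rule linear_symp_form_right)
  also have "\<dots> = 0"
    using insert by (intro sum.neutral) auto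
  finally show ?case
    using insert by (simp add: lam_add)
qed

lemma lam_eq_inner_if_isotropic_support:
  assumes isotropic: "\<And>k l. k \<in> K \<Longrightarrow> l \<in> K \<Longrightarrow> symp_form (axis k 1) (axis l 1) = 0"
    and support: "\<And>k. k \<notin> K \<Longrightarrow> z $ k = 0"
  shows "lam z = z \<bullet> coeffs"
proof -
  have "z = (\<Sum>k\<in>UNIV. z $ k *\<^sub>R axis k 1)"
    using basis_expansion[of z] by (simp add: scalar_mult_eq_scaleR)
  also have "\<dots> = (\<Sum>k\<in>K. z $ k *\<^sub>R axis k 1)"
    using support by (intro sum.mono_neutral_right) auto
  finally have "lam z = lam (\<Sum>k\<in>K. z $ k *\<^sub>R axis k 1)"
    by (rule arg_cong)
  also have "\<dots> = (\<Sum>k\<in>K. lam (z $ k *\<^sub>R axis k 1))"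
    by (rule lam_sum_pairwise_orthogonal)
      (simp_all add: isotropic bilinear_lmul[OF bilinear_symp_form] bilinear_rmul[OF bilinear_symp_form])
  also have "\<dots> = (\<Sum>k\<in>K. z $ k * coeffs $ k)"
    by (simp add: lam_scaleR coeffs_def)
  also have "\<dots> = (\<Sum>k\<in>UNIV. z $ k * coeffs $ k)"
    using support by (intro sum.mono_neutral_left) auto
  finally show ?thesis
    by (simp add: inner_vec_def)
qed

lemma lam_eq_inner_if_split:
  assumes "\<And>a. p $ Inr a = 0" and "\<And>a. q $ Inl a = 0" and "symp_form p q = 0"
  shows "lam (p + q) = (p + q) \<bullet> coeffs"
proof -
  have "lam p = p \<bullet> coeffs"
    by (rule lam_eq_inner_if_isotropic_support[where K = "range Inl"])
      (auto simp: symp_form_axis_Inl, metis assms(1) obj_sumE rangeI)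
  moreover have "lam q = q \<bullet> coeffs"
    by (rule lam_eq_inner_if_isotropic_support[where K = "range Inr"])
      (auto simp: symp_form_axis_Inr, metis assms(2) obj_sumE rangeI)
  ultimately show ?thesis
    by (simp add: lam_add assms(3) inner_add_left)
qed

lemma lam_symp_plane:
  assumes "j \<noteq> i"
  shows "lam (x *\<^sub>R axis (Inl i) 1 + y *\<^sub>R axis (Inr i) 1)
    = (x *\<^sub>R axis (Inl i) 1 + y *\<^sub>R axis (Inr i) 1) \<bullet> coeffs"
    (is "lam ?z = _")
proof -
  define z' where "z' = x *\<^sub>R axis (Inl j) 1 - y *\<^sub>R axis (Inr j) (1::real)"
  have partner: "lam ?z + t * lam z' = (?z + t *\<^sub>R z') \<bullet> coeffs" if "t * t = 1" for t
  proof -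
    let ?p = "x *\<^sub>R (axis (Inl i) 1 + t *\<^sub>R axis (Inl j) 1)"
    let ?q = "y *\<^sub>R (axis (Inr i) 1 - t *\<^sub>R axis (Inr j) 1)"
    have "symp_form ?p ?q = (\<Sum>a\<in>UNIV. x * y * ((if a = j then 1 else 0) - (if a = i then 1 else 0)))"
      unfolding symp_form_as_sum
    proof (intro sum.cong refl)
      show "?p $ Inr a * ?q $ Inl a - ?p $ Inl a * ?q $ Inr a
          = x * y * ((if a = j then 1 else 0) - (if a = i then 1 else 0))" for a
        using that assms by (auto simp: axis_def algebra_simps)
    qed
    also have "\<dots> = 0"
      by (simp add: sum_subtractf flip: sum_distrib_left)
    finally have lam_pq: "lam (?p + ?q) = (?p + ?q) \<bullet> coeffs"
      by (intro lam_eq_inner_if_split) (simp_all add: axis_def)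
    have "symp_form ?z (t *\<^sub>R z') = 0"
      using assms by (auto simp: z'_def symp_form_as_sum axis_def intro!: sum.neutral)
    then have "lam ?z + t * lam z' = lam (?z + t *\<^sub>R z')"
      by (simp add: lam_add lam_scaleR)
    also have "?z + t *\<^sub>R z' = ?p + ?q"
      by (simp add: z'_def algebra_simps)
    also note lam_pq
    also have "?p + ?q = ?z + t *\<^sub>R z'"
      by (simp add: z'_def algebra_simps)
    finally show ?thesis .
  qed
  from partner[of 1] partner[of "-1"] show ?thesis
    by (simp add: inner_add_left inner_diff_left)
qed

lemma lam_eq_inner:
  assumes "CARD('m) \<ge> 2"
  shows "lam z = z \<bullet> coeffs"
proof -
  have plane: "lam (symp_plane_proj i z) = symp_plane_proj i z \<bullet> coeffs" for i
  proof -
    have "UNIV \<noteq> {i}"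
    proof
      assume "UNIV = {i}"
      then have "CARD('m) = 1"
        using card_1_singleton_iff by auto
      with assms show False
        by simp
    qed
    then obtain j where "j \<noteq> i"
      by blast
    then show ?thesis
      unfolding symp_plane_proj_def by (rule lam_symp_plane)
  qed
  have "lam z = lam (\<Sum>i\<in>UNIV. symp_plane_proj i z)"
    by (simp add: sum_symp_plane_proj)
  also have "\<dots> = (\<Sum>i\<in>UNIV. lam (symp_plane_proj i z))"
    by (rule lam_sum_pairwise_orthogonal) (simp_all add: symp_form_symp_plane_proj)
  also have "\<dots> = (\<Sum>i\<in>UNIV. symp_plane_proj i z) \<bullet> coeffs"
    by (simp add: plane inner_sum_left)
  also have "\<dots> = z \<bullet> coeffs"
    by (simp add: sum_symp_plane_proj)
  finally show ?thesis .
qed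

end

theorem lemma1:
  fixes lam :: "real ^ ('m::finite + 'm) \<Rightarrow> real"
  assumes "CARD('m) \<ge> 2"
    and "\<And>a z. lam (a *\<^sub>R z) = a * lam z"
    and "\<And>z1 z2. symp_form z1 z2 = 0 \<Longrightarrow> lam (z1 + z2) = lam z1 + lam z2"
  shows "linear lam"
proof -
  interpret symplectically_additive lam
    using assms(2,3) by unfold_locales
  show ?thesis
    by (rule linearI) (simp_all add: lam_eq_inner[OF assms(1)] inner_add_left)
qed

end
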